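(* Let $\mathcal{A}=\mathbb{C}\setminus(-\infty,0]$ and let $H$ be the principal branch on $\mathcal{A}$ given by $H(z)=\ln\frac{z(1+z)}{1+z^2}\big/\ln\frac{1+z^2}{1+z}$ for $z\ne1$ and $H(1)=1$ (principal logarithm). Then for $t>0$, \[ \lim_{\varepsilon\to0^+}\Re[(-t+\varepsilon i)H(-t+\varepsilon i)] = \begin{cases} \dfrac{t\ln\frac{1+t^2}{t(1-t)}}{\ln\frac{1+t^2}{1-t}},&0<t<1,\\ t, & t=1,\\ \dfrac{t\bigl[\ln\frac{1+t^2}{t-1}\ln\frac{1+t^2}{t(t-1)}+2\pi^2\bigr]} {\bigl(\ln\frac{1+t^2}{t-1}\bigr)^2+\pi^2}, &1<t<1+\sqrt2,\\ \dfrac{t\ln\frac{1+t^2}{t-1}\ln\frac{1+t^2}{t(t-1)}}{\bigl(\ln\frac{1+t^2}{t-1}\bigr)^2+\pi^2}, &1+\sqrt2\le t<\infty, \end{cases} \] and \[ \lim_{\varepsilon\to0^+}\Im[(-t+\varepsilon i)H(-t+\varepsilon i)] = \begin{cases} -\dfrac{\pi t}{\ln\frac{1+t^2}{1-t}},&0<t<1,\\ 0, & t=1,\\ -\dfrac{\pi t\ln\frac{t(1+t^2)}{t-1}} {\bigl(\ln\frac{1+t^2}{t-1}\bigr)^2+\pi^2}, &1<t<1+\sqrt2,\\ -\dfrac{\pi t\ln\frac{1+t^2}{t(t-1)}}{\bigl(\ln\frac{1+t^2}{t-1}\bigr)^2+\pi^2}, &1+\sqrt2\le t<\infty. \end{cases}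 \]
   Context: $H$ is the holomorphic extension to $\mathcal{A}$ of $H(x)=\frac{\ln x}{\ln(x^2+1)-\ln(x+1)}-1$, $x\in(0,\infty)$; the principal logarithm is $\ln z=\ln|z|+i\arg z$ with $-\pi<\arg z<\pi$. *)

theory Defs
  imports "HOL-Analysis.Analysis"
begin

text \<open>The branch of H used in the paper: numerator ln(z(1+z)/(1+z^2)) is read as
  Ln z - Ln((1+z^2)/(1+z)), i.e. H(z) = Ln z / Ln((1+z^2)/(1+z)) - 1, principal logarithms,
  with H(1) = 1.\<close>
definition H :: "complex \<Rightarrow> complex" where
  "H z = (if z = 1 then 1
          else (Ln z - Ln ((1 + z^2) / (1 + z))) / Ln ((1 + z^2) / (1 + z)))"

end

theory Submission
  imports Defs
begin

(* Along z = -t + e\<i>, e \<rightarrow> 0+, we have Ln z \<rightarrow> ln t + \<i>\<pi>, while W z = (1 + z\<^sup>2) / (1 + z), whose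
   logarithm is the denominator of H, tends to the real number (1 + t\<^sup>2) / (1 - t).  For t < 1 this
   is positive and Ln is continuous there.  For t > 1 it is negative, so Ln (W z) tends to
   ln \<bar>W (-t)\<bar> \<plusminus> \<i>\<pi> according to the sign of Im (W z), which is that of t\<^sup>2 - 2t - 1 + e\<^sup>2 and hence
   switches at t = 1 + \<surd>2.  For t = 1, W has a pole and 1 / Ln (W z) \<rightarrow> 0.  Since
   z H z = z Ln z / Ln (W z) - z, the limit is t (1 - (ln t + \<i>\<pi>) / lim Ln (W z)), whose real and
   imaginary parts are the stated expressions. *)

definition W :: "complex \<Rightarrow> complex" where
  "W z = (1 + z^2) / (1 + z)"

lemma Ln_upper_half: "Im z > 0 \<Longrightarrow> Ln z = Ln (- z) + \<i> * pi"
  using Ln_minus[of z] by (cases "z = 0") auto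

lemma Ln_lower_half: "Im z < 0 \<Longrightarrow> Ln z = Ln (- z) - \<i> * pi"
  using Ln_minus[of z] by (cases "z = 0") auto

lemma tendsto_Ln_negative_from_above:
  assumes "(f \<longlongrightarrow> of_real x) F" "x < 0" "\<forall>\<^sub>F y in F. Im (f y) > 0"
  shows "((\<lambda>y. Ln (f y)) \<longlongrightarrow> Complex (ln (- x)) pi) F"
proof -
  have "((\<lambda>y. Ln (- f y) + \<i> * pi) \<longlongrightarrow> Ln (- of_real x) + \<i> * pi) F"
    using assms(1,2) by (intro tendsto_intros) (auto simp: complex_nonpos_Reals_iff)
  moreover have "Ln (- of_real x) + \<i> * pi = Complex (ln (- x)) pi"
    using assms(2) by (simp add: Ln_of_real complex_eq_iff flip: of_real_minus)
  ultimately have "((\<lambda>y. Ln (- f y) + \<i> * pi) \<longlongrightarrow> Complex (ln (- x)) pi) F"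
    by simp
  then show ?thesis
    by (rule Lim_transform_eventually) (use assms(3) in \<open>eventually_elim, simp add: Ln_upper_half\<close>)
qed

lemma tendsto_Ln_negative_from_below:
  assumes "(f \<longlongrightarrow> of_real x) F" "x < 0" "\<forall>\<^sub>F y in F. Im (f y) < 0"
  shows "((\<lambda>y. Ln (f y)) \<longlongrightarrow> Complex (ln (- x)) (- pi)) F"
proof -
  have "((\<lambda>y. Ln (- f y) - \<i> * pi) \<longlongrightarrow> Ln (- of_real x) - \<i> * pi) F"
    using assms(1,2) by (intro tendsto_intros) (auto simp: complex_nonpos_Reals_iff)
  moreover have "Ln (- of_real x) - \<i> * pi = Complex (ln (- x)) (- pi)"
    using assms(2) by (simp add: Ln_of_real complex_eq_iff flip: of_real_minus)
  ultimately have "((\<lambda>y. Ln (- f y) - \<i> * pi) \<longlongrightarrow> Complex (ln (- x)) (- pi)) F"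
    by simp
  then show ?thesis
    by (rule Lim_transform_eventually) (use assms(3) in \<open>eventually_elim, simp add: Ln_lower_half\<close>)
qed

lemma filterlim_Ln_at_infinity:
  assumes "filterlim f at_infinity F"
  shows "filterlim (\<lambda>x. Ln (f x)) at_infinity F"
proof -
  have norm_f: "filterlim (\<lambda>x. norm (f x)) at_top F"
    using assms by (simp add: filterlim_at_infinity_conv_norm_at_top)
  have "\<forall>\<^sub>F x in F. ln (norm (f x)) \<le> norm (Ln (f x))"
    using norm_f[unfolded filterlim_at_top_dense, rule_format, of 0]
  proof eventually_elim
    case (elim x)
    then have "Re (Ln (f x)) = ln (norm (f x))" by auto
    then show ?case using abs_Re_le_cmod[of "Ln (f x)"] by linarith
  qed
  with filterlim_compose[OF ln_at_top norm_f] have "filterlim (\<lambda>x. norm (Ln (f x))) at_top F"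
    by (rule filterlim_at_top_mono)
  then show ?thesis by (simp add: filterlim_at_infinity_conv_norm_at_top)
qed

lemma Im_W: "Im (W z) = Im z * ((cmod z)^2 + 2 * Re z - 1) / (cmod (1 + z))^2"
  unfolding W_def cmod_power2 by (simp add: Im_divide power2_eq_square algebra_simps)

lemma Ln_W_nonzero:
  assumes "Re z \<noteq> 0" "Im z \<noteq> 0"
  shows "Ln (W z) \<noteq> 0"
proof
  assume "Ln (W z) = 0"
  then have "W z = 0 \<or> W z = 1" by (metis exp_Ln exp_zero)
  moreover have "1 + z \<noteq> 0" "1 + z^2 \<noteq> 0"
    using assms by (auto simp: complex_eq_iff power2_eq_square)
  ultimately have "z * (z - 1) = 0"
    by (auto simp: W_def power2_eq_square algebra_simps)
  then have "z = 0 \<or> z = 1" by simp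
  with assms show False by auto
qed

lemma mult_H_eq:
  assumes "Re z \<noteq> 0" "Im z \<noteq> 0"
  shows "z * H z = z * Ln z * inverse (Ln (W z)) - z"
  using Ln_W_nonzero[OF assms] assms by (auto simp: H_def W_def field_simps)

lemma Im_W_approach:
  "Im (W (Complex (- t) e)) = e * (t^2 - 2 * t - 1 + e^2) / ((1 - t)^2 + e^2)"
proof -
  have "1 + Complex (- t) e = Complex (1 - t) e" by (simp add: complex_eq_iff)
  then show ?thesis
    by (simp only: Im_W cmod_power2) (simp add: power2_eq_square algebra_simps)
qed

lemma eventually_Im_W_approach_pos:
  assumes "t^2 - 2 * t - 1 \<ge> 0"
  shows "\<forall>\<^sub>F e in at_right 0. Im (W (Complex (- t) e)) > 0"
  using eventually_at_right_less[of 0]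
proof eventually_elim
  case (elim e)
  have "0 < (1 - t)^2 + e^2" "0 < t^2 - 2 * t - 1 + e^2"
    using elim assms by (simp_all add: add_nonneg_pos)
  with elim show ?case by (simp add: Im_W_approach)
qed

lemma eventually_Im_W_approach_neg:
  assumes "t^2 - 2 * t - 1 < 0"
  shows "\<forall>\<^sub>F e in at_right 0. Im (W (Complex (- t) e)) < 0"
proof -
  have "((\<lambda>e::real. t^2 - 2 * t - 1 + e^2) \<longlongrightarrow> t^2 - 2 * t - 1 + 0^2) (at_right 0)"
    by (intro tendsto_intros)
  then have "\<forall>\<^sub>F e in at_right 0. t^2 - 2 * t - 1 + e^2 < 0"
    using assms by (intro order_tendstoD) auto
  with eventually_at_right_less[of 0] show ?thesis
  proof eventually_elim
    case (elim e)
    have "0 < (1 - t)^2 + e^2" using elim by (simp add: add_nonneg_pos)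
    with elim show ?case by (simp add: Im_W_approach mult_pos_neg divide_neg_pos)
  qed
qed

lemma tendsto_W_approach:
  assumes "t \<noteq> 1"
  shows "((\<lambda>e. W (Complex (- t) e)) \<longlongrightarrow> of_real ((1 + t^2) / (1 - t))) (at_right 0)"
proof -
  have "((\<lambda>e. W (Complex (- t) e)) \<longlongrightarrow> W (Complex (- t) 0)) (at_right 0)"
    unfolding W_def using assms by (intro tendsto_intros) (auto simp: complex_eq_iff)
  moreover have "W (Complex (- t) 0) = of_real ((1 + t^2) / (1 - t))"
    by (simp add: W_def Complex_eq)
  ultimately show ?thesis by simp
qed

lemma filterlim_W_approach_one: "filterlim (\<lambda>e. W (Complex (- 1) e)) at_infinity (at_right 0)"
proof -
  have "((\<lambda>e. 1 + (Complex (- 1) e)^2) \<longlongrightarrow> 2) (at_right 0)"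
    by (auto intro!: tendsto_eq_intros simp: complex_eq_iff power2_eq_square)
  moreover have "filterlim (\<lambda>e. 1 + Complex (- 1) e) (at 0) (at_right 0)"
  proof (rule filterlim_atI)
    show "((\<lambda>e. 1 + Complex (- 1) e) \<longlongrightarrow> 0) (at_right 0)"
      by (auto intro!: tendsto_eq_intros simp: complex_eq_iff)
    show "\<forall>\<^sub>F e in at_right 0. 1 + Complex (- 1) e \<noteq> 0"
      using eventually_at_right_less[of 0] by eventually_elim (simp add: complex_eq_iff)
  qed
  ultimately show ?thesis
    unfolding W_def divide_inverse
    by (intro tendsto_mult_filterlim_at_infinity filterlim_compose[OF filterlim_inverse_at_infinity])
      auto
qed

lemma less_one_plus_sqrt2_iff:
  fixes t :: real
  assumes "t > 1"
  shows "t < 1 + sqrt 2 \<longleftrightarrow> t^2 - 2 * t - 1 < 0"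
proof -
  have "t - 1 = sqrt ((t - 1)^2)" using assms by simp
  then have "t < 1 + sqrt 2 \<longleftrightarrow> sqrt ((t - 1)^2) < sqrt 2" by linarith
  also have "\<dots> \<longleftrightarrow> t^2 - 2 * t - 1 < 0" by (simp add: power2_eq_square algebra_simps)
  finally show ?thesis .
qed

definition Ln_W_boundary :: "real \<Rightarrow> complex" where
  "Ln_W_boundary t =
     Complex (ln \<bar>(1 + t^2) / (1 - t)\<bar>) (if t < 1 then 0 else if t < 1 + sqrt 2 then - pi else pi)"

lemma Ln_W_boundary_nonzero:
  assumes "t > 0" "t \<noteq> 1"
  shows "Ln_W_boundary t \<noteq> 0"
proof (cases "t < 1")
  case True
  then have "(1 + t^2) / (1 - t) > 1" using assms by (simp add: field_simps add_pos_pos)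
  then have "ln \<bar>(1 + t^2) / (1 - t)\<bar> > 0" by (subst abs_of_pos) auto
  then show ?thesis by (simp add: Ln_W_boundary_def complex_eq_iff)
qed (simp add: Ln_W_boundary_def complex_eq_iff)

lemma tendsto_Ln_W_approach:
  assumes "t > 0" "t \<noteq> 1"
  shows "((\<lambda>e. Ln (W (Complex (- t) e))) \<longlongrightarrow> Ln_W_boundary t) (at_right 0)"
proof -
  note W_lim = tendsto_W_approach[OF assms(2)]
  consider "t < 1" | "1 < t" "t < 1 + sqrt 2" | "1 + sqrt 2 \<le> t"
    using assms by linarith
  then show ?thesis
  proof cases
    case 1
    then have pos: "(1 + t^2) / (1 - t) > 0" by (simp add: add_pos_nonneg)
    have "((\<lambda>e. Ln (W (Complex (- t) e))) \<longlongrightarrow> Ln (of_real ((1 + t^2) / (1 - t)))) (at_right 0)"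
      using W_lim pos by (intro tendsto_Ln) (auto simp: complex_nonpos_Reals_iff)
    moreover have "Ln (of_real ((1 + t^2) / (1 - t))) = Ln_W_boundary t"
      unfolding Ln_of_real[OF pos] using 1 pos by (simp add: Ln_W_boundary_def Complex_eq)
    ultimately show ?thesis by simp
  next
    case 2
    then have "t^2 - 2 * t - 1 < 0" by (simp add: less_one_plus_sqrt2_iff)
    moreover have "(1 + t^2) / (1 - t) < 0" using 2 by (simp add: divide_pos_neg add_pos_nonneg)
    ultimately show ?thesis
      using tendsto_Ln_negative_from_below[OF W_lim _ eventually_Im_W_approach_neg] 2
      by (simp add: Ln_W_boundary_def minus_divide_right flip: abs_minus_commute)
  next
    case 3
    then have "t > 1" using real_sqrt_gt_0_iff[of 2] by linarith
    with 3 less_one_plus_sqrt2_iff[of t] have "t^2 - 2 * t - 1 \<ge> 0" by linarith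
    moreover have "(1 + t^2) / (1 - t) < 0" using \<open>t > 1\<close> by (simp add: divide_pos_neg add_pos_nonneg)
    ultimately show ?thesis
      using tendsto_Ln_negative_from_above[OF W_lim _ eventually_Im_W_approach_pos] 3 \<open>t > 1\<close>
      by (simp add: Ln_W_boundary_def minus_divide_right flip: abs_minus_commute)
  qed
qed

definition boundary_value :: "real \<Rightarrow> complex" where
  "boundary_value t = (if t = 1 then 1 else t * (1 - Complex (ln t) pi / Ln_W_boundary t))"

lemma tendsto_inverse_Ln_W_approach:
  assumes "t > 0"
  shows "((\<lambda>e. inverse (Ln (W (Complex (- t) e))))
           \<longlongrightarrow> (if t = 1 then 0 else inverse (Ln_W_boundary t))) (at_right 0)"
proof (cases "t = 1")
  case True
  show ?thesis
    using filterlim_compose[OF tendsto_inverse_0 filterlim_Ln_at_infinity[OF filterlim_W_approach_one]] True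
    by simp
next
  case False
  with assms show ?thesis
    by (simp add: tendsto_inverse tendsto_Ln_W_approach Ln_W_boundary_nonzero)
qed

lemma tendsto_mult_H_approach:
  assumes "t > 0"
  shows "((\<lambda>e. Complex (- t) e * H (Complex (- t) e)) \<longlongrightarrow> boundary_value t) (at_right 0)"
proof -
  have Ln_z: "((\<lambda>e. Ln (Complex (- t) e)) \<longlongrightarrow> Complex (ln t) pi) (at_right 0)"
    using assms eventually_at_right_less[of 0]
    by (intro tendsto_Ln_negative_from_above[where x = "- t", simplified])
      (auto intro!: tendsto_eq_intros simp: Complex_eq)
  have "((\<lambda>e. Complex (- t) e * Ln (Complex (- t) e) * inverse (Ln (W (Complex (- t) e)))
           - Complex (- t) e)
         \<longlongrightarrow> of_real (- t) * Complex (ln t) pi * (if t = 1 then 0 else inverse (Ln_W_boundary t))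
           - of_real (- t)) (at_right 0)"
    by (intro tendsto_intros Ln_z tendsto_inverse_Ln_W_approach assms)
      (auto intro!: tendsto_eq_intros simp: Complex_eq)
  moreover have "of_real (- t) * Complex (ln t) pi * (if t = 1 then 0 else inverse (Ln_W_boundary t))
           - of_real (- t) = boundary_value t"
    by (simp add: boundary_value_def field_simps)
  moreover have "\<forall>\<^sub>F e in at_right 0. Complex (- t) e * Ln (Complex (- t) e) * inverse (Ln (W (Complex (- t) e)))
           - Complex (- t) e = Complex (- t) e * H (Complex (- t) e)"
    using eventually_at_right_less[of 0] by eventually_elim (use assms in \<open>simp add: mult_H_eq\<close>)
  ultimately show ?thesis
    using Lim_transform_eventually by fastforce
qed

lemma Re_mult_one_minus_divide_Complex:
  assumes "L^2 + s^2 \<noteq> 0"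
  shows "Re (of_real t * (1 - Complex a b / Complex L s))
           = t * (L * (L - a) + s * (s - b)) / (L^2 + s^2)"
  using assms by (simp add: Re_divide power2_eq_square field_simps)

lemma Im_mult_one_minus_divide_Complex:
  assumes "L^2 + s^2 \<noteq> 0"
  shows "Im (of_real t * (1 - Complex a b / Complex L s)) = - (t * (b * L - a * s) / (L^2 + s^2))"
  using assms by (simp add: Im_divide power2_eq_square field_simps)

lemma boundary_value_cases:
  assumes "t > 0"
  obtains (below_one) "t < 1" "boundary_value t = t * (1 - Complex (ln t) pi / Complex (ln ((1 + t^2) / (1 - t))) 0)"
  | (one) "t = 1" "boundary_value t = 1"
  | (below_sqrt) "1 < t" "t < 1 + sqrt 2"
      "boundary_value t = t * (1 - Complex (ln t) pi / Complex (ln ((1 + t^2) / (t - 1))) (- pi))"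
  | (above_sqrt) "1 < t" "1 + sqrt 2 \<le> t"
      "boundary_value t = t * (1 - Complex (ln t) pi / Complex (ln ((1 + t^2) / (t - 1))) pi)"
proof -
  have "\<bar>(1 + t^2) / (1 - t)\<bar> = (1 + t^2) / (t - 1)" if "t > 1"
    using that by (simp add: abs_div_pos add_pos_nonneg flip: abs_minus_commute)
  moreover have "1 < t" if "1 + sqrt 2 \<le> t" using that real_sqrt_gt_0_iff[of 2] by linarith
  ultimately show ?thesis
    using that assms by (cases "t < 1"; cases "t = 1"; cases "t < 1 + sqrt 2")
      (auto simp: boundary_value_def Ln_W_boundary_def add_pos_nonneg)
qed

lemma ln_div_mult_eq:
  fixes a t c :: real
  assumes "a > 0" "t > 0" "c > 0"
  shows "ln (a / (t * c)) = ln (a / c) - ln t"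
  using assms by (simp add: ln_div ln_mult)

lemma ln_mult_div_eq:
  fixes a t c :: real
  assumes "a > 0" "t > 0" "c > 0"
  shows "ln (t * a / c) = ln t + ln (a / c)"
  using assms by (simp add: ln_div ln_mult)

lemma Re_boundary_value:
  assumes "t > 0"
  shows "Re (boundary_value t) =
           (if t < 1 then t * ln ((1 + t^2) / (t * (1 - t))) / ln ((1 + t^2) / (1 - t))
            else if t = 1 then t
            else if t < 1 + sqrt 2 then
              t * (ln ((1 + t^2) / (t - 1)) * ln ((1 + t^2) / (t * (t - 1))) + 2 * pi^2)
                / ((ln ((1 + t^2) / (t - 1)))^2 + pi^2)
            else
              t * ln ((1 + t^2) / (t - 1)) * ln ((1 + t^2) / (t * (t - 1)))
                / ((ln ((1 + t^2) / (t - 1)))^2 + pi^2))"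
proof -
  have pos: "1 + t^2 > 0" by (simp add: add_pos_nonneg)
  from assms show ?thesis
  proof (cases rule: boundary_value_cases)
    case below_one
    define L where "L = ln ((1 + t^2) / (1 - t))"
    have "(1 + t^2) / (1 - t) > 1" using assms below_one by (simp add: field_simps add_pos_pos)
    then have "L > 0" by (simp add: L_def)
    then have "Re (boundary_value t) = t * (L - ln t) / L"
      using below_one Re_mult_one_minus_divide_Complex[of L 0 t "ln t" pi]
      by (simp add: L_def power2_eq_square)
    with below_one show ?thesis by (simp add: L_def ln_div_mult_eq[OF pos assms])
  next
    case below_sqrt
    then have "t - 1 > 0" by simp
    with below_sqrt(1,2) show ?thesis
      unfolding below_sqrt(3) ln_div_mult_eq[OF pos assms \<open>t - 1 > 0\<close>]
      by (subst Re_mult_one_minus_divide_Complex) (simp_all add: add_nonneg_pos algebra_simps power2_eq_square)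
  next
    case above_sqrt
    then have "t - 1 > 0" by simp
    with above_sqrt(1,2) show ?thesis
      unfolding above_sqrt(3) ln_div_mult_eq[OF pos assms \<open>t - 1 > 0\<close>]
      by (subst Re_mult_one_minus_divide_Complex) (simp_all add: add_nonneg_pos algebra_simps power2_eq_square)
  qed simp
qed

lemma Im_boundary_value:
  assumes "t > 0"
  shows "Im (boundary_value t) =
           (if t < 1 then - (pi * t / ln ((1 + t^2) / (1 - t)))
            else if t = 1 then 0
            else if t < 1 + sqrt 2 then
              - (pi * t * ln (t * (1 + t^2) / (t - 1)) / ((ln ((1 + t^2) / (t - 1)))^2 + pi^2))
            else
              - (pi * t * ln ((1 + t^2) / (t * (t - 1))) / ((ln ((1 + t^2) / (t - 1)))^2 + pi^2)))"
proof -
  have pos: "1 + t^2 > 0" by (simp add: add_pos_nonneg)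
  from assms show ?thesis
  proof (cases rule: boundary_value_cases)
    case below_one
    define L where "L = ln ((1 + t^2) / (1 - t))"
    have "(1 + t^2) / (1 - t) > 1" using assms below_one by (simp add: field_simps add_pos_pos)
    then have "L > 0" by (simp add: L_def)
    with below_one show ?thesis
      using Im_mult_one_minus_divide_Complex[of L 0 t "ln t" pi]
      by (simp add: L_def power2_eq_square)
  next
    case below_sqrt
    then have "t - 1 > 0" by simp
    with below_sqrt(1,2) show ?thesis
      unfolding below_sqrt(3) ln_mult_div_eq[OF pos assms \<open>t - 1 > 0\<close>]
      by (subst Im_mult_one_minus_divide_Complex) (simp_all add: add_nonneg_pos algebra_simps power2_eq_square)
  next
    case above_sqrt
    then have "t - 1 > 0" by simp
    with above_sqrt(1,2) show ?thesis
      unfolding above_sqrt(3) ln_div_mult_eq[OF pos assms \<open>t - 1 > 0\<close>]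
      by (subst Im_mult_one_minus_divide_Complex) (simp_all add: add_nonneg_pos algebra_simps power2_eq_square)
  qed simp
qed

theorem lemma4p5:
  fixes t :: real
  assumes "t > 0"
  shows "((\<lambda>e::real. Re ((complex_of_real (-t) + complex_of_real e * \<i>)
              * H (complex_of_real (-t) + complex_of_real e * \<i>)))
          \<longlongrightarrow>
           (if t < 1 then t * ln ((1 + t^2) / (t * (1 - t))) / ln ((1 + t^2) / (1 - t))
            else if t = 1 then t
            else if t < 1 + sqrt 2 then
              t * (ln ((1 + t^2) / (t - 1)) * ln ((1 + t^2) / (t * (t - 1))) + 2 * pi^2)
                / ((ln ((1 + t^2) / (t - 1)))^2 + pi^2)
            else
              t * ln ((1 + t^2) / (t - 1)) * ln ((1 + t^2) / (t * (t - 1)))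
                / ((ln ((1 + t^2) / (t - 1)))^2 + pi^2))) (at_right 0)
       \<and> ((\<lambda>e::real. Im ((complex_of_real (-t) + complex_of_real e * \<i>)
              * H (complex_of_real (-t) + complex_of_real e * \<i>)))
          \<longlongrightarrow>
           (if t < 1 then - (pi * t / ln ((1 + t^2) / (1 - t)))
            else if t = 1 then 0
            else if t < 1 + sqrt 2 then
              - (pi * t * ln (t * (1 + t^2) / (t - 1)) / ((ln ((1 + t^2) / (t - 1)))^2 + pi^2))
            else
              - (pi * t * ln ((1 + t^2) / (t * (t - 1))) / ((ln ((1 + t^2) / (t - 1)))^2 + pi^2))))
          (at_right 0)"
proof -
  have approach: "complex_of_real (- t) + complex_of_real e * \<i> = Complex (- t) e" for e
    by (simp add: complex_eq_iff)
  show ?thesis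
    using tendsto_Re[OF tendsto_mult_H_approach[OF assms]] tendsto_Im[OF tendsto_mult_H_approach[OF assms]]
    unfolding approach Re_boundary_value[OF assms] Im_boundary_value[OF assms] by blast
qed

end
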